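(* Let $(\alpha_j,\rho_j)_{j\in\mathbb{Z}}$ be a sequence of pairs $(\alpha_j,\rho_j)\in\mathbb{C}^2$ with $|\alpha_j|^2+|\rho_j|^2=1$, and let $\mathcal E=\mathcal L\mathcal M$ be the associated generalized extended CMV matrix on $\ell^2(\mathbb{Z})$. Identify $\ell^2(\mathbb{Z})$ with $\ell^2(\mathbb{Z})\otimes\mathbb{C}^2$ via $\delta_{2j-1}\mapsto\delta_j^+$ and $\delta_{2j}\mapsto\delta_j^-$. Then under this identification $$\mathcal E=S_+C_1S_-C_2,$$ where $C_1,C_2$ are the coin operators with local coins $C_1(j)=\sigma_1\Theta(\alpha_{2j},\rho_{2j})$ and $C_2(j)=\sigma_1\Theta(\alpha_{2j-1},\rho_{2j-1})$, and $\sigma_1=\begin{bmatrix}0&1\\1&0\end{bmatrix}$.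
   Context: For $(\alpha,\rho)\in\mathbb{C}^2$ with $|\alpha|^2+|\rho|^2=1$, $\Theta(\alpha,\rho)=\begin{bmatrix}\bar\alpha&\rho\\ \bar\rho&-\alpha\end{bmatrix}$. $\mathcal L=\bigoplus_{j\in\mathbb{Z}}\Theta(\alpha_{2j},\rho_{2j})$ and $\mathcal M=\bigoplus_{j\in\mathbb{Z}}\Theta(\alpha_{2j+1},\rho_{2j+1})$, where each block $\Theta(\alpha_i,\rho_i)$ acts on $\ell^2(\{i,i+1\})$ as a matrix with respect to the basis $(\delta_i,\delta_{i+1})$; $\mathcal E=\mathcal L\mathcal M$. On $\ell^2(\mathbb{Z})\otimes\mathbb{C}^2$ with basis $\delta_j^\pm=\delta_j\otimes e_\pm$ ($e_+=(1,0)^\top$, $e_-=(0,1)^\top$), $S_\pm=T^{\pm1}\otimes P_\pm+\mathbb{1}\otimes P_\mp$ where $T\delta_j=\delta_{j+1}$ and $P_\pm=|e_\pm\rangle\langle e_\pm|$; a coin operator acts as $C(\delta_j\otimes v)=\delta_j\otimes C(j)v$. *)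

theory Defs
  imports "HOL-Analysis.Analysis"
begin

text \<open>Operators on l2(Z) are represented by their (finitely banded) action on
  sequences int => complex; vectors of l2(Z) (x) C^2 are functions int => complex^2,
  with e_plus = component 1 and e_minus = component 2.\<close>

definition Theta :: "complex \<Rightarrow> complex \<Rightarrow> complex^2^2" where
  "Theta a r = vector [vector [cnj a, r], vector [cnj r, - a]]"

definition sigma1 :: "complex^2^2" where
  "sigma1 = vector [vector [0, 1], vector [1, 0]]"

text \<open>Direct sum of blocks Theta(alpha_i, rho_i) acting on l2({i,i+1}) w.r.t.
  the basis (delta_i, delta_(i+1)), for all i with i = s (mod 2).\<close>
definition theta_blocks :: "int \<Rightarrow> (int \<Rightarrow> complex) \<Rightarrow> (int \<Rightarrow> complex) \<Rightarrow> (int \<Rightarrow> complex) \<Rightarrow> (int \<Rightarrow> complex)" where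
  "theta_blocks s \<alpha> \<rho> v n =
     (let i = (if even (n - s) then n else n - 1);
          w = Theta (\<alpha> i) (\<rho> i) *v vector [v i, v (i + 1)]
      in if n = i then w $ 1 else w $ 2)"

definition CMV_L :: "(int \<Rightarrow> complex) \<Rightarrow> (int \<Rightarrow> complex) \<Rightarrow> (int \<Rightarrow> complex) \<Rightarrow> (int \<Rightarrow> complex)" where
  "CMV_L \<alpha> \<rho> = theta_blocks 0 \<alpha> \<rho>"

definition CMV_M :: "(int \<Rightarrow> complex) \<Rightarrow> (int \<Rightarrow> complex) \<Rightarrow> (int \<Rightarrow> complex) \<Rightarrow> (int \<Rightarrow> complex)" where
  "CMV_M \<alpha> \<rho> = theta_blocks 1 \<alpha> \<rho>"

definition CMV_E :: "(int \<Rightarrow> complex) \<Rightarrow> (int \<Rightarrow> complex) \<Rightarrow> (int \<Rightarrow> complex) \<Rightarrow> (int \<Rightarrow> complex)" where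
  "CMV_E \<alpha> \<rho> v = CMV_L \<alpha> \<rho> (CMV_M \<alpha> \<rho> v)"

text \<open>Shifts S_plus = T (x) P_plus + 1 (x) P_minus and S_minus = T^-1 (x) P_minus + 1 (x) P_plus,
  where (T psi)(j) = psi(j-1) since T delta_j = delta_(j+1).\<close>
definition S_plus :: "(int \<Rightarrow> complex^2) \<Rightarrow> (int \<Rightarrow> complex^2)" where
  "S_plus \<psi> j = vector [\<psi> (j - 1) $ 1, \<psi> j $ 2]"

definition S_minus :: "(int \<Rightarrow> complex^2) \<Rightarrow> (int \<Rightarrow> complex^2)" where
  "S_minus \<psi> j = vector [\<psi> j $ 1, \<psi> (j + 1) $ 2]"

definition coin_op :: "(int \<Rightarrow> complex^2^2) \<Rightarrow> (int \<Rightarrow> complex^2) \<Rightarrow> (int \<Rightarrow> complex^2)" where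
  "coin_op C \<psi> j = C j *v \<psi> j"

definition ident :: "(int \<Rightarrow> complex) \<Rightarrow> (int \<Rightarrow> complex^2)" where
  "ident v j = vector [v (2 * j - 1), v (2 * j)]"

end

theory Submission
  imports Defs
begin

text \<open>The identification puts \<open>\<delta>(2j-1), \<delta>(2j)\<close> into the fibre over \<open>j\<close>, which is exactly
  a block of \<open>\<M>\<close>; so \<open>\<M>\<close> becomes the coin operator with coins \<open>\<Theta>(\<alpha>(2j-1), \<rho>(2j-1))\<close>.
  The blocks \<open>\<delta>(2j), \<delta>(2j+1)\<close> of \<open>\<L>\<close> straddle two fibres: after swapping components
  with \<open>\<sigma>\<^sub>1\<close>, \<open>S\<^sub>-\<close> brings \<open>\<delta>(2j+1)\<close> into the fibre over \<open>j\<close>, the coin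
  \<open>\<sigma>\<^sub>1\<Theta>(\<alpha>(2j), \<rho>(2j))\<close> acts there, and \<open>S\<^sub>+\<close> moves the result back. Composing, the
  adjacent coins \<open>\<sigma>\<^sub>1\<close> and \<open>\<Theta>(\<alpha>(2j-1), \<rho>(2j-1))\<close> merge into \<open>C\<^sub>2\<close>.\<close>

lemma matrix_vector_mult_2:
  "(M :: 'a::semiring_1^2^2) *v x = vector [M$1$1 * x$1 + M$1$2 * x$2, M$2$1 * x$1 + M$2$2 * x$2]"
  by (simp add: vec_eq_iff forall_2 matrix_vector_mult_def sum_2)

lemma sigma1_mult: "sigma1 *v x = vector [x$2, x$1]"
  by (simp add: matrix_vector_mult_2 sigma1_def)

lemma coin_op_coin_op: "coin_op A (coin_op B \<psi>) = coin_op (\<lambda>j. A j ** B j) \<psi>"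
  by (simp add: fun_eq_iff coin_op_def matrix_vector_mul_assoc)

lemma theta_blocks_block:
  assumes "even (n - s)"
  shows "vector [theta_blocks s a r v n, theta_blocks s a r v (n + 1)] =
    Theta (a n) (r n) *v vector [v n, v (n + 1)]"
  using assms by (simp add: vec_eq_iff forall_2 theta_blocks_def Let_def)

lemma ident_CMV_M:
  "ident (CMV_M \<alpha> \<rho> v) = coin_op (\<lambda>j. Theta (\<alpha> (2 * j - 1)) (\<rho> (2 * j - 1))) (ident v)"
proof
  fix j :: int
  show "ident (CMV_M \<alpha> \<rho> v) j = coin_op (\<lambda>j. Theta (\<alpha> (2 * j - 1)) (\<rho> (2 * j - 1))) (ident v) j"
    using theta_blocks_block[of "2 * j - 1" 1 \<alpha> \<rho> v]
    by (simp add: ident_def coin_op_def CMV_M_def)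
qed

lemma S_minus_swap_ident: "S_minus (coin_op (\<lambda>_. sigma1) (ident w)) j = vector [w (2 * j), w (2 * j + 1)]"
  by (simp add: S_minus_def coin_op_def sigma1_mult ident_def algebra_simps)

lemma ident_CMV_L:
  "ident (CMV_L \<alpha> \<rho> w) =
    S_plus (coin_op (\<lambda>j. sigma1 ** Theta (\<alpha> (2 * j)) (\<rho> (2 * j)))
      (S_minus (coin_op (\<lambda>_. sigma1) (ident w))))"
proof
  fix j :: int
  have block: "coin_op (\<lambda>j. sigma1 ** Theta (\<alpha> (2 * j)) (\<rho> (2 * j)))
      (S_minus (coin_op (\<lambda>_. sigma1) (ident w))) k =
    vector [CMV_L \<alpha> \<rho> w (2 * k + 1), CMV_L \<alpha> \<rho> w (2 * k)]" for k
    using theta_blocks_block[of "2 * k" 0 \<alpha> \<rho> w, symmetric]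
    by (simp add: coin_op_def S_minus_swap_ident CMV_L_def sigma1_mult
        flip: matrix_vector_mul_assoc)
  show "ident (CMV_L \<alpha> \<rho> w) j = S_plus (coin_op (\<lambda>j. sigma1 ** Theta (\<alpha> (2 * j)) (\<rho> (2 * j)))
      (S_minus (coin_op (\<lambda>_. sigma1) (ident w)))) j"
    using block[of "j - 1"] block[of j] by (simp add: S_plus_def ident_def algebra_simps)
qed

theorem lemmaA1:
  fixes \<alpha> \<rho> :: "int \<Rightarrow> complex" and v :: "int \<Rightarrow> complex"
  assumes "\<And>j. (cmod (\<alpha> j))\<^sup>2 + (cmod (\<rho> j))\<^sup>2 = 1"
    and "(\<lambda>n. (cmod (v n))\<^sup>2) summable_on UNIV"
  shows "ident (CMV_E \<alpha> \<rho> v) =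
    S_plus (coin_op (\<lambda>j. sigma1 ** Theta (\<alpha> (2 * j)) (\<rho> (2 * j)))
      (S_minus (coin_op (\<lambda>j. sigma1 ** Theta (\<alpha> (2 * j - 1)) (\<rho> (2 * j - 1))) (ident v))))"
proof -
  have "ident (CMV_E \<alpha> \<rho> v) =
    S_plus (coin_op (\<lambda>j. sigma1 ** Theta (\<alpha> (2 * j)) (\<rho> (2 * j)))
      (S_minus (coin_op (\<lambda>_. sigma1) (ident (CMV_M \<alpha> \<rho> v)))))"
    by (simp add: CMV_E_def ident_CMV_L)
  also have "coin_op (\<lambda>_. sigma1) (ident (CMV_M \<alpha> \<rho> v)) =
    coin_op (\<lambda>j. sigma1 ** Theta (\<alpha> (2 * j - 1)) (\<rho> (2 * j - 1))) (ident v)"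
    by (simp add: ident_CMV_M coin_op_coin_op)
  finally show ?thesis .
qed

end
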